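(* Let $1\leq p\leq q$ be integers. Then $K_{p,q}$ is strong $p$-cop-win, and it is not strong $k$-cop-win for any $1\leq k\leq p-1$. Furthermore, $$\lim_{m\to\infty}\mathrm{capt}_p(K_{p,q},m)=\begin{cases}2\lceil q/p\rceil-2, & q>p,\\ 1, & q=p.\end{cases}$$
   Context: $K_{p,q}$ is the complete bipartite graph with parts of sizes $p$ and $q$. All graphs are reflexive (a player may stay in place). The game of $k$ cops and $m$ robbers on $G$: in round 0 the cops first choose starting vertices, then the robbers choose theirs. In each round $i\geq 1$, all $k$ cops move (each to an adjacent vertex or staying), then all $m$ robbers move likewise. Several players may occupy the same vertex. Whenever a cop and some robbers occupy the same vertex, those robbers are captured and take no further part in the game. Both sides have full information. The cops win if all robbers are captured after finitely many rounds. $G$ is $k$-cop-win if $k$ cops can always win against one robber. For a $k$-cop-win graph $G$, $\mathrm{capt}_k(G,m)$ is the index of the round in which the last robber is captured when $k$ cops play to minimize this index and $m$ robbers play to maximize it. $G$ is strong $k$-cop-win if $\lim_{m\to\infty}\mathrm{capt}_k(G,m)$ exists (and is finite). *)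

theory Defs
  imports Complex_Main
begin

text \<open>Players may
  always stay in place (reflexive graphs), which is built into the move relations.
  Cop positions: a list of length k; robber positions: a list of length m of
  options, None meaning the robber has been captured.\<close>

definition cmove :: "'v set \<Rightarrow> ('v \<Rightarrow> 'v \<Rightarrow> bool) \<Rightarrow> 'v list \<Rightarrow> 'v list \<Rightarrow> bool" where
  "cmove V E xs ys \<longleftrightarrow> length ys = length xs \<and>
     (\<forall>i<length xs. ys ! i \<in> V \<and> (ys ! i = xs ! i \<or> E (xs ! i) (ys ! i)))"

definition rmove :: "'v set \<Rightarrow> ('v \<Rightarrow> 'v \<Rightarrow> bool) \<Rightarrow> 'v option list \<Rightarrow> 'v option list \<Rightarrow> bool" where
  "rmove V E rs rs' \<longleftrightarrow> length rs' = length rs \<and>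
     (\<forall>i<length rs. (case rs ! i of
        None \<Rightarrow> rs' ! i = None
      | Some v \<Rightarrow> (\<exists>w. rs' ! i = Some w \<and> w \<in> V \<and> (w = v \<or> E v w))))"

definition capture :: "'v list \<Rightarrow> 'v option list \<Rightarrow> 'v option list" where
  "capture C R = map (\<lambda>r. case r of None \<Rightarrow> None
                                | Some v \<Rightarrow> (if v \<in> set C then None else Some v)) R"

definition all_caught :: "'v option list \<Rightarrow> bool" where
  "all_caught R \<longleftrightarrow> (\<forall>r\<in>set R. r = None)"

fun cops_win_within :: "'v set \<Rightarrow> ('v \<Rightarrow> 'v \<Rightarrow> bool) \<Rightarrow> nat \<Rightarrow> 'v list \<Rightarrow> 'v option list \<Rightarrow> bool" where
  "cops_win_within V E 0 C R = all_caught R"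
| "cops_win_within V E (Suc n) C R =
     (all_caught R \<or>
      (\<exists>C'. cmove V E C C' \<and>
         (\<forall>R'. rmove V E (capture C' R) R' \<longrightarrow> cops_win_within V E n C' (capture C' R'))))"

definition capt_bound :: "'v set \<Rightarrow> ('v \<Rightarrow> 'v \<Rightarrow> bool) \<Rightarrow> nat \<Rightarrow> nat \<Rightarrow> nat \<Rightarrow> bool" where
  "capt_bound V E k m t \<longleftrightarrow>
     (\<exists>C0. length C0 = k \<and> set C0 \<subseteq> V \<and>
        (\<forall>R0. length R0 = m \<and> set R0 \<subseteq> V \<longrightarrow>
           cops_win_within V E t C0 (capture C0 (map Some R0))))"

definition capt :: "'v set \<Rightarrow> ('v \<Rightarrow> 'v \<Rightarrow> bool) \<Rightarrow> nat \<Rightarrow> nat \<Rightarrow> nat" where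
  "capt V E k m = (LEAST t. capt_bound V E k m t)"

definition cop_win :: "'v set \<Rightarrow> ('v \<Rightarrow> 'v \<Rightarrow> bool) \<Rightarrow> nat \<Rightarrow> bool" where
  "cop_win V E k \<longleftrightarrow> (\<exists>t. capt_bound V E k 1 t)"

definition strong_cop_win :: "'v set \<Rightarrow> ('v \<Rightarrow> 'v \<Rightarrow> bool) \<Rightarrow> nat \<Rightarrow> bool" where
  "strong_cop_win V E k \<longleftrightarrow> cop_win V E k \<and> convergent (\<lambda>m. real (capt V E k m))"

definition Kpq_V :: "nat \<Rightarrow> nat \<Rightarrow> (nat + nat) set" where
  "Kpq_V p q = Inl ` {..<p} \<union> Inr ` {..<q}"

definition Kpq_E :: "nat + nat \<Rightarrow> nat + nat \<Rightarrow> bool" where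
  "Kpq_E x y \<longleftrightarrow> isl x \<noteq> isl y"

end

theory Submission
  imports Defs
begin

text \<open>With enough robbers, the robbers can keep a robber on every vertex that any robber could
  possibly occupy. Hence for all large m the capture time of m robbers equals the clearing time:
  the length of the shortest cop strategy after which no vertex is contaminated, a vertex being
  contaminated as long as some robber could be on it. In K_{p,q} fewer than p cops never clear the
  graph, so their capture times are unbounded in m (they are finite for two or more cops, who catch
  a robber every two rounds, while one cop never catches a robber standing on its own side).
  The p cops clear the right part in blocks of p vertices, going back to the left part between two
  blocks; this takes 2 ceil(q/p) - 2 rounds if q > p and one round if q = p. An invariant bounding
  the number of cleared right vertices shows that the cops cannot be faster.\<close>

lemma length_capture [simp]: "length (capture C R) = length R"
  by (simp add: capture_def)

lemma nth_capture:
  "i < length R \<Longrightarrow> capture C R ! i =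
     (case R ! i of None \<Rightarrow> None | Some v \<Rightarrow> (if v \<in> set C then None else Some v))"
  by (simp add: capture_def)

lemma nth_capture_eq_Some_iff:
  "i < length R \<Longrightarrow> capture C R ! i = Some w \<longleftrightarrow> R ! i = Some w \<and> w \<notin> set C"
  by (auto simp: nth_capture split: option.splits)

lemma Some_in_capture_iff: "Some v \<in> set (capture C R) \<longleftrightarrow> Some v \<in> set R \<and> v \<notin> set C"
  by (force simp: capture_def split: option.splits if_splits)

lemma all_caught_iff: "all_caught R \<longleftrightarrow> (\<forall>v. Some v \<notin> set R)"
  unfolding all_caught_def by (metis not_None_eq)

lemma cops_win_within_mono:
  "cops_win_within V E n C R \<Longrightarrow> n \<le> n' \<Longrightarrow> cops_win_within V E n' C R"
proof (induction n arbitrary: n' C R)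
  case 0
  then show ?case by (cases n') auto
next
  case (Suc n)
  then obtain n'' where n': "n' = Suc n''" "n \<le> n''" by (cases n') auto
  from Suc.prems(1) show ?case
    unfolding n'(1) cops_win_within.simps(2) using Suc.IH[OF _ n'(2)] by blast
qed

definition robbers_in :: "'v set \<Rightarrow> 'v option list \<Rightarrow> bool" where
  "robbers_in V R \<longleftrightarrow> (\<forall>v. Some v \<in> set R \<longrightarrow> v \<in> V)"

lemma robbers_in_capture: "robbers_in V R \<Longrightarrow> robbers_in V (capture C R)"
  by (simp add: robbers_in_def Some_in_capture_iff)

lemma robbers_in_rmove: "rmove V E R R' \<Longrightarrow> robbers_in V R'"
  unfolding robbers_in_def
proof (intro allI impI)
  fix v assume move: "rmove V E R R'" and "Some v \<in> set R'"
  then obtain i where i: "i < length R" "R' ! i = Some v"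
    by (auto simp: rmove_def in_set_conv_nth)
  with move show "v \<in> V"
    unfolding rmove_def by (cases "R ! i") (auto elim!: allE[of _ i])
qed

subsection \<open>The clearing game\<close>

text \<open>D is the set of contaminated vertices, those a robber might occupy, and
  clears V E n C D says that cops standing on C can make it empty within n rounds.\<close>

definition contaminated_after :: "'v set \<Rightarrow> ('v \<Rightarrow> 'v \<Rightarrow> bool) \<Rightarrow> 'v set \<Rightarrow> 'v set \<Rightarrow> 'v set" where
  "contaminated_after V E D S = {u \<in> V. u \<notin> S \<and> (\<exists>v\<in>D. v \<notin> S \<and> (u = v \<or> E v u))}"

fun clears :: "'v set \<Rightarrow> ('v \<Rightarrow> 'v \<Rightarrow> bool) \<Rightarrow> nat \<Rightarrow> 'v list \<Rightarrow> 'v set \<Rightarrow> bool" where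
  "clears V E 0 C D \<longleftrightarrow> D = {}"
| "clears V E (Suc n) C D \<longleftrightarrow>
     D = {} \<or> (\<exists>C'. cmove V E C C' \<and> clears V E n C' (contaminated_after V E D (set C')))"

lemma clears_SucI:
  "cmove V E C C' \<Longrightarrow> clears V E n C' (contaminated_after V E D (set C')) \<Longrightarrow> clears V E (Suc n) C D"
  by auto

lemma clears_empty: "clears V E n C {}"
  by (cases n) auto

lemma contaminated_after_mono: "D' \<subseteq> D \<Longrightarrow> contaminated_after V E D' S \<subseteq> contaminated_after V E D S"
  by (auto simp: contaminated_after_def)

lemma contaminated_after_covered: "D \<subseteq> S \<Longrightarrow> contaminated_after V E D S = {}"
  by (auto simp: contaminated_after_def)

lemma contaminated_after_subset: "contaminated_after V E D S \<subseteq> V"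
  by (auto simp: contaminated_after_def)

lemma clears_subset: "clears V E n C D \<Longrightarrow> D' \<subseteq> D \<Longrightarrow> clears V E n C D'"
proof (induction n arbitrary: C D D')
  case 0
  then show ?case by simp
next
  case (Suc n)
  then show ?case by (metis clears.simps(2) contaminated_after_mono subset_empty)
qed

lemma clears_mono: "clears V E n C D \<Longrightarrow> n \<le> n' \<Longrightarrow> clears V E n' C D"
proof (induction n arbitrary: n' C D)
  case 0
  then show ?case using clears_empty by simp
next
  case (Suc n)
  then obtain n'' where n': "n' = Suc n''" "n \<le> n''" by (cases n') auto
  from Suc.prems(1) show ?case
    unfolding n'(1) clears.simps(2) using Suc.IH[OF _ n'(2)] by blast
qed

lemma clears_imp_cops_win_within:
  "clears V E n C D \<Longrightarrow> (\<forall>v. Some v \<in> set R \<longrightarrow> v \<in> D) \<Longrightarrow> cops_win_within V E n C R"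
proof (induction n arbitrary: C D R)
  case 0
  then show ?case by (simp add: all_caught_iff)
next
  case (Suc n)
  show ?case
  proof (cases "D = {}")
    case True
    with Suc.prems show ?thesis by (simp add: all_caught_iff)
  next
    case False
    with Suc.prems obtain C' where "cmove V E C C'"
      and clear: "clears V E n C' (contaminated_after V E D (set C'))" by auto
    moreover have "cops_win_within V E n C' (capture C' R')"
      if move: "rmove V E (capture C' R) R'" for R'
    proof (rule Suc.IH[OF clear], intro allI impI)
      fix w assume "Some w \<in> set (capture C' R')"
      then obtain i where i: "i < length R" "R' ! i = Some w" and "w \<notin> set C'"
        using move by (auto simp: in_set_conv_nth rmove_def nth_capture_eq_Some_iff)
      from move i(1) have "case capture C' R ! i of None \<Rightarrow> R' ! i = None
          | Some v \<Rightarrow> (\<exists>w. R' ! i = Some w \<and> w \<in> V \<and> (w = v \<or> E v w))"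
        by (simp add: rmove_def)
      with i(2) obtain v where v: "capture C' R ! i = Some v" and "w \<in> V" "w = v \<or> E v w"
        by (cases "capture C' R ! i") auto
      moreover from v i(1) have "v \<in> D" "v \<notin> set C'"
        using Suc.prems(2) by (auto simp: nth_capture_eq_Some_iff in_set_conv_nth)
      ultimately show "w \<in> contaminated_after V E D (set C')"
        using \<open>w \<notin> set C'\<close> by (auto simp: contaminated_after_def)
    qed
    ultimately show ?thesis by auto
  qed
qed

subsection \<open>Many robbers force the cops to clear the graph\<close>

lemma rmove_map_option:
  assumes "\<And>i v. i < length R \<Longrightarrow> R ! i = Some v \<Longrightarrow> g i v \<in> V \<and> (g i v = v \<or> E v (g i v))"
  shows "rmove V E R (map (\<lambda>i. map_option (g i) (R ! i)) [0..<length R])"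
  using assms by (auto simp: rmove_def split: option.splits)

lemma exists_map_with_large_fibres:
  assumes "finite T" "T \<noteq> {}"
  shows "finite I \<Longrightarrow> card T * f \<le> card I \<Longrightarrow>
    \<exists>g. g ` I \<subseteq> T \<and> (\<forall>u\<in>T. f \<le> card {i\<in>I. g i = u})"
  using assms
proof (induction T arbitrary: I rule: finite_ne_induct)
  case (singleton x)
  then show ?case by (intro exI[of _ "\<lambda>_. x"]) auto
next
  case (insert x T)
  then obtain J where J: "J \<subseteq> I" "card J = f"
    by (metis card_insert_disjoint le_add1 le_trans mult_Suc obtain_subset_with_card_n)
  with insert.prems have "finite J" "card T * f \<le> card (I - J)"
    by (auto simp: card_Diff_subset card_insert_disjoint insert.hyps finite_subset)
  with insert.prems insert.IH obtain g where g: "g ` (I - J) \<subseteq> T"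
    "\<forall>u\<in>T. f \<le> card {i \<in> I - J. g i = u}" by blast
  define g' where "g' i = (if i \<in> J then x else g i)" for i
  have "f \<le> card {i \<in> I. g' i = u}" if "u \<in> insert x T" for u
  proof (cases "u = x")
    case True
    then have "J \<subseteq> {i \<in> I. g' i = u}" using J by (auto simp: g'_def)
    then have "card J \<le> card {i \<in> I. g' i = u}" using insert.prems(1) by (intro card_mono) auto
    with J show ?thesis by simp
  next
    case False
    then have "card {i \<in> I - J. g i = u} \<le> card {i \<in> I. g' i = u}"
      using insert.prems(1) by (intro card_mono) (auto simp: g'_def)
    with False that g(2) show ?thesis by (meson insertE le_trans)
  qed
  moreover have "g' ` I \<subseteq> insert x T" using g by (auto simp: g'_def)
  ultimately show ?case by blast
qed

definition robbers_at :: "'v option list \<Rightarrow> 'v \<Rightarrow> nat" where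
  "robbers_at R v = card {i. i < length R \<and> R ! i = Some v}"

lemma robbers_at_pos_imp_mem: "0 < robbers_at R v \<Longrightarrow> Some v \<in> set R"
  unfolding robbers_at_def by (metis (mono_tags, lifting) card.empty empty_Collect_eq nth_mem
      less_irrefl)

text \<open>The robbers on a contaminated vertex v spread evenly over the cop-free vertices
  they can reach from v.\<close>

lemma robbers_can_spread:
  assumes "finite V" "robbers_in V R" "D \<subseteq> V"
    and crowded: "\<forall>v\<in>D. card V * f \<le> robbers_at R v"
  shows "\<exists>R'. rmove V E (capture C R) R' \<and>
    (\<forall>u\<in>contaminated_after V E D (set C). f \<le> robbers_at (capture C R') u)"
proof -
  define I where "I v = {i. i < length R \<and> R ! i = Some v}" for v
  define T where "T v = {u \<in> V. u \<notin> set C \<and> (u = v \<or> E v u)}" for v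
  have "\<exists>g. g ` I v \<subseteq> T v \<and> (\<forall>u\<in>T v. f \<le> card {i\<in>I v. g i = u})"
    if v: "v \<in> D - set C" for v
  proof (rule exists_map_with_large_fibres)
    show "finite (T v)" "finite (I v)" using \<open>finite V\<close> by (auto simp: T_def I_def)
    show "T v \<noteq> {}" using v \<open>D \<subseteq> V\<close> by (auto simp: T_def)
    have "card (T v) \<le> card V" using \<open>finite V\<close> by (intro card_mono) (auto simp: T_def)
    then have "card (T v) * f \<le> card V * f" by simp
    also have "\<dots> \<le> card (I v)" using crowded v by (simp add: I_def robbers_at_def)
    finally show "card (T v) * f \<le> card (I v)" .
  qed
  then obtain G where G: "\<And>v. v \<in> D - set C \<Longrightarrow>
      G v ` I v \<subseteq> T v \<and> (\<forall>u\<in>T v. f \<le> card {i\<in>I v. G v i = u})"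
    by metis
  define target where "target i v = (if v \<in> D then G v i else v)" for i v
  define R' where
    "R' = map (\<lambda>i. map_option (target i) (capture C R ! i)) [0..<length (capture C R)]"
  have R'_nth: "R' ! i = Some (G v i)" if "i \<in> I v" "v \<in> D - set C" for i v
    using that by (simp add: R'_def I_def target_def nth_capture)
  have "rmove V E (capture C R) R'"
    unfolding R'_def
  proof (rule rmove_map_option)
    fix i v assume i: "i < length (capture C R)" and "capture C R ! i = Some v"
    with i have v: "R ! i = Some v" "v \<notin> set C" by (auto simp: nth_capture_eq_Some_iff)
    with i \<open>robbers_in V R\<close> have "v \<in> V" by (auto simp: robbers_in_def in_set_conv_nth)
    moreover have "G v i \<in> T v" if "v \<in> D" using G[of v] v i that by (auto simp: I_def)
    ultimately show "target i v \<in> V \<and> (target i v = v \<or> E v (target i v))"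
      by (auto simp: target_def T_def)
  qed
  moreover have "f \<le> robbers_at (capture C R') u" if "u \<in> contaminated_after V E D (set C)" for u
  proof -
    from that obtain v where v: "v \<in> D - set C" and u: "u \<in> T v"
      by (auto simp: contaminated_after_def T_def)
    have "{i\<in>I v. G v i = u} \<subseteq> {i. i < length (capture C R') \<and> capture C R' ! i = Some u}"
      using R'_nth[OF _ v] u by (auto simp: I_def R'_def T_def nth_capture_eq_Some_iff)
    then have "card {i\<in>I v. G v i = u} \<le> robbers_at (capture C R') u"
      unfolding robbers_at_def by (intro card_mono) auto
    with G[OF v] u show ?thesis by auto
  qed
  ultimately show ?thesis by blast
qed

lemma crowded_vertex_occupied:
  assumes "finite V" "v \<in> V" "card V ^ n \<le> robbers_at R v"
  shows "Some v \<in> set R"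
proof -
  from assms(1,2) have "0 < card V ^ n" by (auto simp: card_gt_0_iff)
  also note assms(3)
  finally show ?thesis by (rule robbers_at_pos_imp_mem)
qed

lemma cops_win_within_imp_clears:
  assumes "finite V"
  shows "cops_win_within V E n C R \<Longrightarrow> robbers_in V R \<Longrightarrow> D \<subseteq> V \<Longrightarrow>
    \<forall>v\<in>D. card V ^ n \<le> robbers_at R v \<Longrightarrow> clears V E n C D"
proof (induction n arbitrary: C D R)
  case 0
  have "v \<notin> D" for v
    using 0 crowded_vertex_occupied[OF assms, of v 0 R] by (auto simp: all_caught_iff)
  then show ?case by auto
next
  case (Suc n)
  show ?case
  proof (cases "D = {}")
    case False
    then obtain v where "v \<in> D" by blast
    with Suc.prems(3,4) have "Some v \<in> set R"
      by (intro crowded_vertex_occupied[OF assms, of v "Suc n"]) auto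
    with Suc.prems(1) obtain C' where move: "cmove V E C C'" and
      win: "\<And>R'. rmove V E (capture C' R) R' \<Longrightarrow> cops_win_within V E n C' (capture C' R')"
      by (auto simp: all_caught_iff)
    from Suc.prems(4) have "\<forall>v\<in>D. card V * card V ^ n \<le> robbers_at R v" by simp
    then obtain R' where "rmove V E (capture C' R) R'"
      and "\<forall>u\<in>contaminated_after V E D (set C'). card V ^ n \<le> robbers_at (capture C' R') u"
      using robbers_can_spread[OF assms Suc.prems(2,3)] by blast
    then have "clears V E n C' (contaminated_after V E D (set C'))"
      by (intro Suc.IH)
        (auto intro: win robbers_in_capture robbers_in_rmove simp: contaminated_after_def)
    with move show ?thesis by auto
  qed (simp add: clears_empty)
qed

definition can_clear :: "'v set \<Rightarrow> ('v \<Rightarrow> 'v \<Rightarrow> bool) \<Rightarrow> nat \<Rightarrow> nat \<Rightarrow> bool" where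
  "can_clear V E k t \<longleftrightarrow> (\<exists>C0. length C0 = k \<and> set C0 \<subseteq> V \<and> clears V E t C0 (V - set C0))"

lemma can_clear_mono: "can_clear V E k t \<Longrightarrow> t \<le> t' \<Longrightarrow> can_clear V E k t'"
  unfolding can_clear_def using clears_mono by blast

lemma can_clear_imp_capt_bound: "can_clear V E k t \<Longrightarrow> capt_bound V E k m t"
  unfolding can_clear_def capt_bound_def
  by (fastforce intro: clears_imp_cops_win_within simp: Some_in_capture_iff)

lemma capt_bound_imp_can_clear:
  assumes "finite V" "card V ^ Suc t \<le> m" "capt_bound V E k m t"
  shows "can_clear V E k t"
proof -
  from assms(3) obtain C0 where C0: "length C0 = k" "set C0 \<subseteq> V" and
    win: "\<And>R0. length R0 = m \<Longrightarrow> set R0 \<subseteq> V \<Longrightarrow> cops_win_within V E t C0 (capture C0 (map Some R0))"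
    unfolding capt_bound_def by blast
  have "clears V E t C0 (V - set C0)"
  proof (cases "V - set C0 = {}")
    case False
    have "card (V - set C0) * card V ^ t \<le> card V * card V ^ t"
      using assms(1) by (simp add: card_mono)
    also have "\<dots> \<le> card {..<m}" using assms(2) by simp
    finally have "card (V - set C0) * card V ^ t \<le> card {..<m}" .
    moreover have "finite (V - set C0)" using assms(1) by simp
    ultimately obtain g where g: "g ` {..<m} \<subseteq> V - set C0"
      "\<forall>u\<in>V - set C0. card V ^ t \<le> card {i\<in>{..<m}. g i = u}"
      using exists_map_with_large_fibres[OF _ False finite_lessThan] by blast
    define R0 where "R0 = map g [0..<m]"
    have R0: "length R0 = m" "set R0 \<subseteq> V" using g(1) by (auto simp: R0_def image_subset_iff)
    have "capture C0 (map Some R0) = map Some R0" using g(1)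
      by (auto simp: capture_def R0_def image_subset_iff)
    moreover have "robbers_at (map Some R0) u = card {i\<in>{..<m}. g i = u}" for u
      unfolding robbers_at_def R0_def by (auto intro: arg_cong[where f = card])
    ultimately show ?thesis
      using win[OF R0] g(2) R0(2) assms(1)
      by (intro cops_win_within_imp_clears) (auto simp: robbers_in_def)
  qed (metis clears_empty)
  with C0 show ?thesis unfolding can_clear_def by blast
qed

lemma power_Suc_le_power_of_less: "s < t \<Longrightarrow> (a::nat) ^ Suc s \<le> a ^ t"
  by (cases "a = 0") (simp, metis One_nat_def Suc_leI not_gr0 power_increasing)

lemma capt_eq_clearing_time:
  assumes "finite V" "can_clear V E k T" "\<forall>t<T. \<not> can_clear V E k t" "card V ^ T \<le> m"
  shows "capt V E k m = T"
  unfolding capt_def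
proof (rule Least_equality)
  show "capt_bound V E k m T" using assms(2) by (rule can_clear_imp_capt_bound)
  fix t assume bound: "capt_bound V E k m t"
  show "T \<le> t"
  proof (rule ccontr)
    assume "\<not> T \<le> t"
    then have "card V ^ Suc t \<le> card V ^ T" by (intro power_Suc_le_power_of_less) simp
    also note assms(4)
    finally have "card V ^ Suc t \<le> m" .
    with assms(1) bound have "can_clear V E k t" by (intro capt_bound_imp_can_clear)
    with assms(3) \<open>\<not> T \<le> t\<close> show False by simp
  qed
qed

lemma capt_not_convergent:
  assumes "finite V" "\<And>t. \<not> can_clear V E k t" "\<And>m. \<exists>t. capt_bound V E k m t"
  shows "\<not> convergent (\<lambda>m. real (capt V E k m))"
proof
  assume "convergent (\<lambda>m. real (capt V E k m))"
  then have "Bseq (\<lambda>m. real (capt V E k m))" by (rule convergent_imp_Bseq)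
  then obtain K where K: "\<And>m. norm (real (capt V E k m)) \<le> K"
    by (elim BseqE) blast
  define t where "t = nat \<lceil>K\<rceil>"
  define m where "m = card V ^ Suc t"
  obtain b where "capt_bound V E k m b" using assms(3) by blast
  then have "capt_bound V E k m (capt V E k m)" unfolding capt_def by (rule LeastI)
  moreover have "real (capt V E k m) \<le> real t"
    using K[of m] by (simp add: t_def) linarith
  then have "capt V E k m < Suc t" by simp
  then have "card V ^ Suc (capt V E k m) \<le> m"
    unfolding m_def by (rule power_Suc_le_power_of_less)
  ultimately have "can_clear V E k (capt V E k m)"
    using assms(1) by (intro capt_bound_imp_can_clear)
  with assms(2) show False by blast
qed

lemma mem_Kpq_V: "x \<in> Kpq_V p q \<longleftrightarrow> (case x of Inl i \<Rightarrow> i < p | Inr j \<Rightarrow> j < q)"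
  by (cases x) (auto simp: Kpq_V_def)

lemma finite_Kpq_V [simp]: "finite (Kpq_V p q)"
  by (simp add: Kpq_V_def)

lemma card_Kpq_V [simp]: "card (Kpq_V p q) = p + q"
  unfolding Kpq_V_def by (subst card_Un_disjoint) (auto simp: card_image)

lemma Kpq_not_covered: "length C < p + q \<Longrightarrow> \<not> Kpq_V p q \<subseteq> set C"
  by (metis card_Kpq_V card_length card_mono leD List.finite_set order_le_less_trans)

lemma contaminated_after_Kpq:
  "contaminated_after (Kpq_V p q) Kpq_E D S =
     {u \<in> Kpq_V p q. u \<notin> S \<and> (u \<in> D \<or> (\<exists>v\<in>D - S. isl v \<noteq> isl u))}"
  by (auto simp: contaminated_after_def Kpq_E_def)

definition Kpq_left :: "nat \<Rightarrow> (nat + nat) set" where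
  "Kpq_left p = Inl ` {..<p}"

definition Kpq_right :: "nat \<Rightarrow> (nat + nat) set" where
  "Kpq_right q = Inr ` {..<q}"

lemma Kpq_V_eq: "Kpq_V p q = Kpq_left p \<union> Kpq_right q"
  by (simp add: Kpq_V_def Kpq_left_def Kpq_right_def)

lemma finite_Kpq_left [simp]: "finite (Kpq_left p)"
  and finite_Kpq_right [simp]: "finite (Kpq_right q)"
  by (simp_all add: Kpq_left_def Kpq_right_def)

lemma card_Kpq_left [simp]: "card (Kpq_left p) = p"
  and card_Kpq_right [simp]: "card (Kpq_right q) = q"
  by (simp_all add: Kpq_left_def Kpq_right_def card_image)

lemma Kpq_left_iff: "x \<in> Kpq_left p \<longleftrightarrow> x \<in> Kpq_V p q \<and> isl x"
  and Kpq_right_iff: "x \<in> Kpq_right q \<longleftrightarrow> x \<in> Kpq_V p q \<and> \<not> isl x"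
  by (cases x; auto simp: Kpq_left_def Kpq_right_def mem_Kpq_V)+

lemma Kpq_left_side: "Kpq_left p \<subseteq> {x. isl x = True}"
  and Kpq_right_side: "Kpq_right q \<subseteq> {x. isl x = False}"
  by (auto simp: Kpq_left_def Kpq_right_def)

lemma contaminated_after_left_part:
  "D \<subseteq> Kpq_V p q \<Longrightarrow> contaminated_after (Kpq_V p q) Kpq_E D (Kpq_left p) = D \<inter> Kpq_right q"
  unfolding contaminated_after_Kpq
  by (auto simp: Kpq_left_iff[where q = q] Kpq_right_iff[where p = p])

lemma card_visited_side_le:
  assumes "cmove V Kpq_E C C'"
  shows "card ((set C \<union> set C') \<inter> {x. isl x = b}) \<le> length C"
proof -
  from assms have len: "length C' = length C"
    and step: "\<And>i. i < length C \<Longrightarrow> C' ! i = C ! i \<or> isl (C ! i) \<noteq> isl (C' ! i)"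
    by (auto simp: cmove_def Kpq_E_def)
  define h where "h i = (if isl (C ! i) = b then C ! i else C' ! i)" for i
  have "(set C \<union> set C') \<inter> {x. isl x = b} \<subseteq> h ` {..<length C}"
  proof
    fix x assume x: "x \<in> (set C \<union> set C') \<inter> {x. isl x = b}"
    then obtain i where i: "i < length C" "x = C ! i \<or> x = C' ! i"
      using len by (auto simp: in_set_conv_nth)
    with x step[OF i(1)] have "h i = x" by (auto simp: h_def)
    with i(1) show "x \<in> h ` {..<length C}" by blast
  qed
  then have "card ((set C \<union> set C') \<inter> {x. isl x = b}) \<le> card (h ` {..<length C})"
    by (intro card_mono) auto
  also have "\<dots> \<le> length C" using card_image_le[of "{..<length C}" h] by simp
  finally show ?thesis .
qed

lemma exists_unvisited_on_side:
  assumes "cmove V Kpq_E C C'" "length C < card X" "X \<subseteq> {x. isl x = b}" "finite X"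
  shows "\<exists>x\<in>X. x \<notin> set C \<and> x \<notin> set C'"
proof (rule ccontr)
  assume "\<not> ?thesis"
  with assms(3) have "X \<subseteq> (set C \<union> set C') \<inter> {x. isl x = b}" by auto
  then have "card X \<le> card ((set C \<union> set C') \<inter> {x. isl x = b})" by (intro card_mono) auto
  with card_visited_side_le[OF assms(1), of b] assms(2) show False by simp
qed

lemma fewer_cops_never_clear:
  assumes "k < p" "p \<le> q"
  shows "length C = k \<Longrightarrow> Kpq_V p q - set C \<subseteq> D \<Longrightarrow> \<not> clears (Kpq_V p q) Kpq_E n C D"
proof (induction n arbitrary: C D)
  case 0
  with assms Kpq_not_covered[of C p q] show ?case by auto
next
  case (Suc n)
  have "\<not> clears (Kpq_V p q) Kpq_E n C' (contaminated_after (Kpq_V p q) Kpq_E D (set C'))"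
    if move: "cmove (Kpq_V p q) Kpq_E C C'" for C'
  proof (rule Suc.IH)
    show "length C' = k" using move Suc.prems by (simp add: cmove_def)
    from assms Suc.prems(1) have "length C < card (Kpq_left p)" "length C < card (Kpq_right q)"
      by simp_all
    then obtain l r where "l \<in> Kpq_left p" "l \<notin> set C" "l \<notin> set C'"
      and "r \<in> Kpq_right q" "r \<notin> set C" "r \<notin> set C'"
      using exists_unvisited_on_side[OF move _ Kpq_left_side finite_Kpq_left]
        exists_unvisited_on_side[OF move _ Kpq_right_side finite_Kpq_right] by blast
    moreover from this have "l \<in> D" "r \<in> D" using Suc.prems(2) by (auto simp: Kpq_V_eq)
    ultimately show "Kpq_V p q - set C' \<subseteq> contaminated_after (Kpq_V p q) Kpq_E D (set C')"
      unfolding contaminated_after_Kpq by (force simp: Kpq_V_def Kpq_left_def Kpq_right_def)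
  qed
  moreover have "D \<noteq> {}" using Suc.prems assms Kpq_not_covered[of C p q] by auto
  ultimately show ?case by simp
qed

lemma not_can_clear_fewer_cops: "k < p \<Longrightarrow> p \<le> q \<Longrightarrow> \<not> can_clear (Kpq_V p q) Kpq_E k t"
  unfolding can_clear_def using fewer_cops_never_clear by blast

subsection \<open>One cop and two cops\<close>

lemma exists_other_on_same_side:
  assumes "2 \<le> p" "p \<le> q" "x \<in> Kpq_V p q"
  shows "\<exists>w\<in>Kpq_V p q. isl w = isl x \<and> w \<noteq> x"
proof (cases x)
  case (Inl i)
  with assms show ?thesis
    by (intro bexI[of _ "Inl (if i = 0 then 1 else 0)"]) (auto simp: mem_Kpq_V)
next
  case (Inr i)
  with assms show ?thesis
    by (intro bexI[of _ "Inr (if i = 0 then 1 else 0)"]) (auto simp: mem_Kpq_V)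
qed

text \<open>If the cop stays, so does the robber; if the cop crosses over, the robber follows to
  another vertex of the cop's new side.\<close>

lemma one_cop_never_wins:
  assumes "2 \<le> p" "p \<le> q"
  shows "c \<in> Kpq_V p q \<Longrightarrow> v \<in> Kpq_V p q \<Longrightarrow> isl c = isl v \<Longrightarrow> c \<noteq> v \<Longrightarrow>
    \<not> cops_win_within (Kpq_V p q) Kpq_E n [c] [Some v]"
proof (induction n arbitrary: c v)
  case 0
  then show ?case by (simp add: all_caught_def)
next
  case (Suc n)
  show ?case
  proof
    assume "cops_win_within (Kpq_V p q) Kpq_E (Suc n) [c] [Some v]"
    then obtain C' where move: "cmove (Kpq_V p q) Kpq_E [c] C'" and
      win: "\<And>R'. rmove (Kpq_V p q) Kpq_E (capture C' [Some v]) R' \<Longrightarrow>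
          cops_win_within (Kpq_V p q) Kpq_E n C' (capture C' R')"
      by (auto simp: all_caught_def)
    from move obtain c' where C': "C' = [c']" and "c' \<in> Kpq_V p q" and "c' = c \<or> isl c \<noteq> isl c'"
      by (cases C') (auto simp: cmove_def Kpq_E_def)
    with Suc.prems have "v \<noteq> c'" by auto
    obtain w where w: "w \<in> Kpq_V p q" "isl w = isl c'" "w \<noteq> c'" "w = v \<or> isl v \<noteq> isl w"
    proof (cases "c' = c")
      case False
      with exists_other_on_same_side[OF assms \<open>c' \<in> Kpq_V p q\<close>] \<open>c' = c \<or> isl c \<noteq> isl c'\<close>
        Suc.prems(3) that show ?thesis by metis
    qed (use Suc.prems that in auto)
    with \<open>v \<noteq> c'\<close> have "rmove (Kpq_V p q) Kpq_E (capture C' [Some v]) [Some w]"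
      by (auto simp: C' capture_def rmove_def Kpq_E_def)
    with win have "cops_win_within (Kpq_V p q) Kpq_E n [c'] [Some w]"
      using w(3) by (fastforce simp: C' capture_def)
    with Suc.IH[OF \<open>c' \<in> Kpq_V p q\<close> w(1)] w(2,3) show False by simp
  qed
qed

lemma not_cop_win_one_cop:
  assumes "2 \<le> p" "p \<le> q"
  shows "\<not> cop_win (Kpq_V p q) Kpq_E 1"
proof
  assume "cop_win (Kpq_V p q) Kpq_E 1"
  then obtain t C0 where C0: "length C0 = 1" "set C0 \<subseteq> Kpq_V p q" and
    win: "\<And>R0. length R0 = 1 \<Longrightarrow> set R0 \<subseteq> Kpq_V p q \<Longrightarrow>
       cops_win_within (Kpq_V p q) Kpq_E t C0 (capture C0 (map Some R0))"
    unfolding cop_win_def capt_bound_def by blast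
  from C0 obtain c where "C0 = [c]" and c: "c \<in> Kpq_V p q"
    by (cases C0) auto
  obtain v where "v \<in> Kpq_V p q" "isl v = isl c" "v \<noteq> c"
    using exists_other_on_same_side[OF assms c] by blast
  with win[of "[v]"] one_cop_never_wins[OF assms c] \<open>C0 = [c]\<close> show False
    by (simp add: capture_def)
qed

definition uncaught :: "'v option list \<Rightarrow> nat set" where
  "uncaught R = {i. i < length R \<and> R ! i \<noteq> None}"

lemma finite_uncaught [simp]: "finite (uncaught R)"
  by (simp add: uncaught_def)

lemma uncaught_empty_iff: "uncaught R = {} \<longleftrightarrow> all_caught R"
  by (force simp: uncaught_def all_caught_def in_set_conv_nth)

lemma uncaught_rmove: "rmove V E R R' \<Longrightarrow> uncaught R' = uncaught R"
  by (auto simp: rmove_def uncaught_def split: option.splits)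

lemma uncaught_capture_subset: "uncaught (capture C R) \<subseteq> uncaught R"
  by (auto simp: uncaught_def nth_capture split: option.splits)

lemma card_uncaught_capture_less:
  assumes "Some v \<in> set R" "v \<in> set C"
  shows "card (uncaught (capture C R)) < card (uncaught R)"
proof (rule psubset_card_mono)
  from assms(1) obtain j where "j < length R" "R ! j = Some v" by (auto simp: in_set_conv_nth)
  with assms(2) have "j \<in> uncaught R - uncaught (capture C R)"
    by (simp add: uncaught_def nth_capture)
  with uncaught_capture_subset show "uncaught (capture C R) \<subset> uncaught R" by blast
qed simp

lemma catch_robber_across:
  assumes IH: "\<And>C R. length C = k \<Longrightarrow> set C \<subseteq> Kpq_V p q \<Longrightarrow> robbers_in (Kpq_V p q) R \<Longrightarrow>
      card (uncaught R) \<le> n \<Longrightarrow> cops_win_within (Kpq_V p q) Kpq_E (2 * n) C R"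
    and C: "length C = k" "set C \<subseteq> Kpq_V p q"
    and R: "robbers_in (Kpq_V p q) R" "card (uncaught R) \<le> Suc n"
    and robber: "i < length C" "Some v \<in> set R" "isl v \<noteq> isl (C ! i)"
  shows "cops_win_within (Kpq_V p q) Kpq_E (Suc (2 * n)) C R"
proof -
  define C' where "C' = C[i := v]"
  from R(1) robber(2) have "v \<in> Kpq_V p q" by (simp add: robbers_in_def)
  with C robber have "cmove (Kpq_V p q) Kpq_E C C'"
    by (auto simp: cmove_def C'_def nth_list_update Kpq_E_def dest: nth_mem)
  moreover have "cops_win_within (Kpq_V p q) Kpq_E (2 * n) C' (capture C' R')"
    if move: "rmove (Kpq_V p q) Kpq_E (capture C' R) R'" for R'
  proof (rule IH)
    show "length C' = k" using C by (simp add: C'_def)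
    show "set C' \<subseteq> Kpq_V p q"
      using C \<open>v \<in> Kpq_V p q\<close> set_update_subset_insert[of C i v] by (auto simp: C'_def)
    show "robbers_in (Kpq_V p q) (capture C' R')"
      using move by (intro robbers_in_capture robbers_in_rmove)
    have "v \<in> set C'" using robber(1) by (simp add: C'_def set_update_memI)
    with robber(2) have "card (uncaught (capture C' R)) < card (uncaught R)"
      by (rule card_uncaught_capture_less)
    moreover have "card (uncaught (capture C' R')) \<le> card (uncaught (capture C' R))"
      using uncaught_capture_subset[of C' R'] uncaught_rmove[OF move] by (simp add: card_mono)
    ultimately show "card (uncaught (capture C' R')) \<le> n" using R(2) by linarith
  qed
  ultimately show ?thesis by auto
qed

lemma catch_robber_both_sides:
  assumes IH: "\<And>C R. length C = k \<Longrightarrow> set C \<subseteq> Kpq_V p q \<Longrightarrow> robbers_in (Kpq_V p q) R \<Longrightarrow>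
      card (uncaught R) \<le> n \<Longrightarrow> cops_win_within (Kpq_V p q) Kpq_E (2 * n) C R"
    and C: "length C = k" "set C \<subseteq> Kpq_V p q"
    and R: "robbers_in (Kpq_V p q) R" "card (uncaught R) \<le> Suc n"
    and sides: "i < length C" "j < length C" "isl (C ! i) \<noteq> isl (C ! j)"
  shows "cops_win_within (Kpq_V p q) Kpq_E (Suc (2 * n)) C R"
proof (cases "all_caught R")
  case False
  then obtain v where "Some v \<in> set R" by (auto simp: all_caught_iff)
  moreover obtain l where "l < length C" "isl v \<noteq> isl (C ! l)"
    using sides by (cases "isl v = isl (C ! i)") auto
  ultimately show ?thesis using catch_robber_across[OF IH C R] by blast
qed simp

lemma cross_over_then_catch:
  fixes v :: "nat + nat"
  assumes IH: "\<And>C R. length C = k \<Longrightarrow> set C \<subseteq> Kpq_V p q \<Longrightarrow> robbers_in (Kpq_V p q) R \<Longrightarrow>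
      card (uncaught R) \<le> n \<Longrightarrow> cops_win_within (Kpq_V p q) Kpq_E (2 * n) C R"
    and "1 \<le> p" "1 \<le> q" "2 \<le> k"
    and C: "length C = k" "set C \<subseteq> Kpq_V p q"
    and R: "robbers_in (Kpq_V p q) R" "card (uncaught R) \<le> Suc n"
    and same_side: "\<And>i. i < length C \<Longrightarrow> isl (C ! i) = isl v"
  shows "cops_win_within (Kpq_V p q) Kpq_E (Suc (Suc (2 * n))) C R"
proof -
  define w :: "nat + nat" where "w = (if isl v then Inr 0 else Inl 0)"
  have w: "w \<in> Kpq_V p q" "isl w \<noteq> isl v" using assms(2,3) by (auto simp: w_def mem_Kpq_V)
  define C' where "C' = C[0 := w]"
  have C': "length C' = k" "set C' \<subseteq> Kpq_V p q" "isl (C' ! 0) \<noteq> isl (C' ! 1)"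
    using C \<open>2 \<le> k\<close> w same_side[of 1] set_update_subset_insert[of C 0 w]
    by (auto simp: C'_def)
  have "cmove (Kpq_V p q) Kpq_E C C'"
    using C \<open>2 \<le> k\<close> w same_side
    by (auto simp: cmove_def C'_def nth_list_update Kpq_E_def dest: nth_mem)
  moreover have "cops_win_within (Kpq_V p q) Kpq_E (Suc (2 * n)) C' (capture C' R')"
    if move: "rmove (Kpq_V p q) Kpq_E (capture C' R) R'" for R'
  proof (rule catch_robber_both_sides[OF IH C'(1,2) _ _ _ _ C'(3)])
    show "robbers_in (Kpq_V p q) (capture C' R')"
      using move by (intro robbers_in_capture robbers_in_rmove)
    have "card (uncaught (capture C' R')) \<le> card (uncaught R)"
      using uncaught_capture_subset[of C' R'] uncaught_capture_subset[of C' R]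
        uncaught_rmove[OF move] by (metis card_mono finite_uncaught order_trans)
    with R(2) show "card (uncaught (capture C' R')) \<le> Suc n" by simp
  qed (use C' \<open>2 \<le> k\<close> in auto)
  ultimately show ?thesis by auto
qed

lemma two_cops_catch_all:
  assumes "1 \<le> p" "1 \<le> q" "2 \<le> k"
  shows "length C = k \<Longrightarrow> set C \<subseteq> Kpq_V p q \<Longrightarrow> robbers_in (Kpq_V p q) R \<Longrightarrow>
    card (uncaught R) \<le> n \<Longrightarrow> cops_win_within (Kpq_V p q) Kpq_E (2 * n) C R"
proof (induction n arbitrary: C R)
  case 0
  then show ?case by (simp flip: uncaught_empty_iff)
next
  case (Suc n)
  show ?case
  proof (cases "\<exists>i<length C. \<exists>v. Some v \<in> set R \<and> isl v \<noteq> isl (C ! i)")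
    case True
    with catch_robber_across[OF Suc.IH Suc.prems]
    have "cops_win_within (Kpq_V p q) Kpq_E (Suc (2 * n)) C R" by blast
    then show ?thesis by (rule cops_win_within_mono) simp
  next
    case False
    show ?thesis
    proof (cases "all_caught R")
      case False
      then obtain v where "Some v \<in> set R" by (auto simp: all_caught_iff)
      with \<open>\<not> (\<exists>i<length C. _)\<close>
      have same_side: "\<And>i. i < length C \<Longrightarrow> isl (C ! i) = isl v" by blast
      have "cops_win_within (Kpq_V p q) Kpq_E (Suc (Suc (2 * n))) C R"
        by (rule cross_over_then_catch[OF Suc.IH assms Suc.prems same_side])
      also have "Suc (Suc (2 * n)) = 2 * Suc n" by simp
      finally show ?thesis .
    qed simp
  qed
qed

lemma two_cops_capt_bound:
  assumes "1 \<le> p" "1 \<le> q" "2 \<le> k"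
  shows "capt_bound (Kpq_V p q) Kpq_E k m (2 * m)"
  unfolding capt_bound_def
proof (intro exI[of _ "replicate k (Inl 0)"] conjI allI impI)
  show "set (replicate k (Inl 0)) \<subseteq> Kpq_V p q" using assms by (auto simp: mem_Kpq_V)
  fix R0 :: "(nat + nat) list" assume R0: "length R0 = m \<and> set R0 \<subseteq> Kpq_V p q"
  have "uncaught (capture (replicate k (Inl 0)) (map Some R0)) \<subseteq> {..<m}"
    using R0 by (auto simp: uncaught_def)
  then have "card (uncaught (capture (replicate k (Inl 0)) (map Some R0))) \<le> m"
    by (metis card_lessThan card_mono finite_lessThan)
  with R0 \<open>set (replicate k (Inl 0)) \<subseteq> Kpq_V p q\<close> show
    "cops_win_within (Kpq_V p q) Kpq_E (2 * m) (replicate k (Inl 0))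
      (capture (replicate k (Inl 0)) (map Some R0))"
    by (intro two_cops_catch_all[OF assms] robbers_in_capture) (auto simp: robbers_in_def)
qed simp

subsection \<open>p cops: the sweep\<close>

text \<open>The cops sweep the right part block by block (the last block is clipped at q - 1) and
  return to the left part between two blocks, so that no robber gets back behind them.\<close>

definition left_cops :: "nat \<Rightarrow> (nat + nat) list" where
  "left_cops p = map Inl [0..<p]"

definition right_block :: "nat \<Rightarrow> nat \<Rightarrow> nat \<Rightarrow> (nat + nat) list" where
  "right_block p q a = map (\<lambda>i. Inr (min (a + i) (q - 1))) [0..<p]"

definition right_tail :: "nat \<Rightarrow> nat \<Rightarrow> (nat + nat) set" where
  "right_tail q a = Inr ` {a..<q}"

lemma set_left_cops: "set (left_cops p) = Kpq_left p"
  by (auto simp: left_cops_def Kpq_left_def)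

lemma cmove_left_cops_right_block:
  "1 \<le> q \<Longrightarrow> cmove (Kpq_V p q) Kpq_E (left_cops p) (right_block p q a)"
  by (simp add: cmove_def left_cops_def right_block_def mem_Kpq_V Kpq_E_def min_less_iff_disj)

lemma cmove_right_block_left_cops: "cmove (Kpq_V p q) Kpq_E (right_block p q a) (left_cops p)"
  by (simp add: cmove_def left_cops_def right_block_def mem_Kpq_V Kpq_E_def)

lemma mem_right_block:
  assumes "a \<le> i" "i < q" "i < a + p"
  shows "Inr i \<in> set (right_block p q a)"
  unfolding right_block_def set_map
proof (rule image_eqI)
  show "Inr i = Inr (min (a + (i - a)) (q - 1))" using assms by simp
  show "i - a \<in> set [0..<p]" using assms by simp
qed

lemma contaminated_after_last_block:
  assumes "q \<le> a + p"
  shows "contaminated_after (Kpq_V p q) Kpq_E (right_tail q a) (set (right_block p q a)) = {}"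
proof (rule contaminated_after_covered)
  show "right_tail q a \<subseteq> set (right_block p q a)"
    using assms by (auto simp: right_tail_def intro: mem_right_block)
qed

lemma contaminated_after_right_block:
  "contaminated_after (Kpq_V p q) Kpq_E (right_tail q a) (set (right_block p q a)) \<inter> Kpq_right q
   \<subseteq> right_tail q (a + p)"
proof
  fix u
  assume u: "u \<in> contaminated_after (Kpq_V p q) Kpq_E (right_tail q a) (set (right_block p q a))
    \<inter> Kpq_right q"
  then have "\<not> isl u" "u \<notin> set (right_block p q a)"
    by (auto simp: Kpq_right_iff[where p = p] contaminated_after_def)
  with u obtain i where "u = Inr i" "a \<le> i" "i < q"
    by (auto simp: contaminated_after_Kpq right_tail_def)
  moreover from this \<open>u \<notin> set (right_block p q a)\<close> have "a + p \<le> i"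
    using mem_right_block[of a i q p] by (cases "i < a + p") auto
  ultimately show "u \<in> right_tail q (a + p)" by (simp add: right_tail_def)
qed

lemma sweep_right_tail:
  assumes "1 \<le> q"
  shows "q \<le> a + Suc j * p \<Longrightarrow> clears (Kpq_V p q) Kpq_E (2 * j + 1) (left_cops p) (right_tail q a)"
proof (induction j arbitrary: a)
  case 0
  then show ?case
    using cmove_left_cops_right_block[OF assms] contaminated_after_last_block[of q a p] by auto
next
  case (Suc j)
  from Suc.prems have "clears (Kpq_V p q) Kpq_E (2 * j + 1) (left_cops p) (right_tail q (a + p))"
    by (intro Suc.IH) (simp add: algebra_simps)
  moreover have "contaminated_after (Kpq_V p q) Kpq_E
      (contaminated_after (Kpq_V p q) Kpq_E (right_tail q a) (set (right_block p q a))) (Kpq_left p)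
    \<subseteq> right_tail q (a + p)"
    using contaminated_after_right_block
    by (simp add: contaminated_after_left_part contaminated_after_subset)
  ultimately have "clears (Kpq_V p q) Kpq_E (2 * j + 1) (left_cops p)
     (contaminated_after (Kpq_V p q) Kpq_E
       (contaminated_after (Kpq_V p q) Kpq_E (right_tail q a) (set (right_block p q a)))
       (Kpq_left p))"
    by (rule clears_subset)
  then have "clears (Kpq_V p q) Kpq_E (Suc (2 * j + 1)) (right_block p q a)
      (contaminated_after (Kpq_V p q) Kpq_E (right_tail q a) (set (right_block p q a)))"
    by (intro clears_SucI[OF cmove_right_block_left_cops]) (simp add: set_left_cops)
  then have "clears (Kpq_V p q) Kpq_E (Suc (Suc (2 * j + 1))) (left_cops p) (right_tail q a)"
    by (rule clears_SucI[OF cmove_left_cops_right_block[OF assms]])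
  then show ?case by simp
qed

lemma can_clear_Kpq_from_right_block:
  assumes "1 \<le> q" "clears (Kpq_V p q) Kpq_E t (left_cops p) (right_tail q p)"
  shows "can_clear (Kpq_V p q) Kpq_E p (Suc t)"
  unfolding can_clear_def
proof (intro exI conjI)
  let ?C0 = "right_block p q 0"
  show "length ?C0 = p" "set ?C0 \<subseteq> Kpq_V p q"
    using assms(1) by (auto simp: right_block_def mem_Kpq_V)
  have "(Kpq_V p q - set ?C0) \<inter> Kpq_right q \<subseteq> right_tail q p"
  proof
    fix u assume "u \<in> (Kpq_V p q - set ?C0) \<inter> Kpq_right q"
    then obtain i where "u = Inr i" "i < q" "u \<notin> set ?C0" by (auto simp: Kpq_right_def)
    moreover from this have "p \<le> i" using mem_right_block[of 0 i q p] by (cases "i < p") auto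
    ultimately show "u \<in> right_tail q p" by (simp add: right_tail_def)
  qed
  then have
    "contaminated_after (Kpq_V p q) Kpq_E (Kpq_V p q - set ?C0) (Kpq_left p) \<subseteq> right_tail q p"
    by (simp add: contaminated_after_left_part)
  with assms(2) show "clears (Kpq_V p q) Kpq_E (Suc t) ?C0 (Kpq_V p q - set ?C0)"
    by (intro clears_SucI[OF cmove_right_block_left_cops]) (simp add: set_left_cops clears_subset)
qed

lemma two_le_of_less_le_mult:
  fixes p q s :: nat
  assumes "p < q" "q \<le> p * s"
  shows "2 \<le> s"
proof (rule ccontr)
  assume "\<not> 2 \<le> s"
  then have "p * s \<le> p * 1" by (intro mult_le_mono2) simp
  with assms show False by simp
qed

lemma can_clear_Kpq_upper:
  assumes "1 \<le> p" "p \<le> q" "q \<le> p * s"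
  shows "can_clear (Kpq_V p q) Kpq_E p (if p < q then 2 * s - 2 else 1)"
proof (cases "p < q")
  case True
  with assms(3) obtain t where s: "s = t + 2"
    using two_le_of_less_le_mult by (metis add.commute le_add_diff_inverse)
  with True assms(3) have "clears (Kpq_V p q) Kpq_E (2 * t + 1) (left_cops p) (right_tail q p)"
    by (intro sweep_right_tail) (simp_all add: algebra_simps)
  with True assms s show ?thesis
    using can_clear_Kpq_from_right_block[of q p "2 * t + 1"] by simp
next
  case False
  then have "right_tail q p = {}" by (simp add: right_tail_def)
  with False assms show ?thesis
    using can_clear_Kpq_from_right_block[of q p 0] by (simp add: clears_empty)
qed

subsection \<open>p cops: the lower bound\<close>

lemma card_Kpq_parts_inter_le:
  "card (Kpq_right q \<inter> set C) + card (Kpq_left p \<inter> set C) \<le> length C"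
proof -
  have "card (Kpq_right q \<inter> set C) + card (Kpq_left p \<inter> set C) =
      card (Kpq_right q \<inter> set C \<union> Kpq_left p \<inter> set C)"
    by (rule card_Un_disjoint[symmetric]) (auto simp: Kpq_left_def Kpq_right_def)
  also have "\<dots> \<le> card (set C)" by (intro card_mono) auto
  also have "\<dots> \<le> length C" by (rule card_length)
  finally show ?thesis .
qed

lemma card_Kpq_left_inter_le: "card (Kpq_left p \<inter> X) \<le> p"
  by (metis card_Kpq_left card_mono finite_Kpq_left inf_le1)

lemma exists_contaminated_right:
  assumes "card (Kpq_right q - D) + card (Kpq_right q \<inter> S) < q"
  shows "\<exists>r\<in>Kpq_right q. r \<in> D \<and> r \<notin> S"
proof (rule ccontr)
  assume "\<not> ?thesis"
  then have "Kpq_right q \<subseteq> (Kpq_right q - D) \<union> (Kpq_right q \<inter> S)" by blast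
  then have "q \<le> card ((Kpq_right q - D) \<union> (Kpq_right q \<inter> S))"
    by (metis card_Kpq_right card_mono finite_Int finite_Kpq_right finite_Un finite_Diff)
  also have "\<dots> \<le> card (Kpq_right q - D) + card (Kpq_right q \<inter> S)" by (rule card_Un_le)
  finally show False using assms by simp
qed

context
  fixes p q s :: nat
  assumes p_less_q: "p < q" and right_part_large: "p * (s - 1) < q"
begin

lemmas Kpq_parts_iff = Kpq_left_iff[where q = q] Kpq_right_iff[where p = p]

text \<open>The robbers' invariant when n rounds remain, the p cops stand on C and D is contaminated:
  either every cop-free left vertex is contaminated and there are few cleared right vertices
  (the bounds allow p more of them for every two remaining rounds), or every cop-free right vertex
  is contaminated and so is some cop-free left vertex.\<close>

definition left_contaminated :: "nat \<Rightarrow> (nat + nat) list \<Rightarrow> (nat + nat) set \<Rightarrow> bool" where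
  "left_contaminated n C D \<longleftrightarrow> Kpq_left p - set C \<subseteq> D \<and> n + 3 \<le> 2 * s \<and>
     card (Kpq_right q - D) + p * (n div 2) \<le> p * (s - 1) \<and>
     card (Kpq_right q - D) + card (Kpq_left p \<inter> set C) + p * ((n + 1) div 2) \<le> p * s"

definition right_contaminated :: "nat \<Rightarrow> (nat + nat) list \<Rightarrow> (nat + nat) set \<Rightarrow> bool" where
  "right_contaminated n C D \<longleftrightarrow> Kpq_right q - set C \<subseteq> D \<and>
     (\<exists>l\<in>Kpq_left p. l \<in> D \<and> l \<notin> set C) \<and> n + 4 \<le> 2 * s"

lemma left_contaminated_intro:
  assumes "Kpq_left p - set C \<subseteq> D" "card (Kpq_right q - D) \<le> p"
    and "card (Kpq_right q - D) + card (Kpq_left p \<inter> set C) \<le> p \<and> n + 4 \<le> 2 * s \<or>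
      n + 5 \<le> 2 * s"
  shows "left_contaminated n C D"
proof -
  define d where "d = card (Kpq_right q - D)"
  define c where "c = card (Kpq_left p \<inter> set C)"
  have "c \<le> p" unfolding c_def by (rule card_Kpq_left_inter_le)
  from assms(3) have "n + 4 \<le> 2 * s" by auto
  then have "p * (n div 2 + 1) \<le> p * (s - 1)" by (intro mult_le_mono2) linarith
  with assms(2) have "d + p * (n div 2) \<le> p * (s - 1)" by (simp add: d_def algebra_simps)
  moreover have "d + c + p * ((n + 1) div 2) \<le> p * s"
  proof (cases "d + c \<le> p \<and> n + 4 \<le> 2 * s")
    case True
    then have "p * ((n + 1) div 2 + 1) \<le> p * s" by (intro mult_le_mono2) linarith
    with True show ?thesis by (simp add: algebra_simps)
  next
    case False
    with assms(3) have "n + 5 \<le> 2 * s" by (auto simp: d_def c_def)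
    then have "p * ((n + 1) div 2 + 2) \<le> p * s" by (intro mult_le_mono2) linarith
    with assms(2) \<open>c \<le> p\<close> show ?thesis by (simp add: d_def algebra_simps)
  qed
  ultimately show ?thesis
    using assms(1) \<open>n + 4 \<le> 2 * s\<close> by (simp add: left_contaminated_def d_def c_def)
qed

lemma left_contaminated_step_blocked:
  assumes inv: "left_contaminated (Suc n) C D" and move: "cmove (Kpq_V p q) Kpq_E C C'"
    and "length C = p" and blocked: "Kpq_left p \<inter> D \<subseteq> set C'"
  defines "D' \<equiv> contaminated_after (Kpq_V p q) Kpq_E D (set C')"
  shows "left_contaminated n C' D'"
proof -
  define d where "d = card (Kpq_right q - D)"
  define c where "c = card (Kpq_left p \<inter> set C)"
  define x where "x = card (Kpq_right q \<inter> set C')"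
  define c' where "c' = card (Kpq_left p \<inter> set C')"
  from inv have LD: "Kpq_left p - set C \<subseteq> D" and "n + 4 \<le> 2 * s"
    and H1: "d + p * ((n + 1) div 2) \<le> p * (s - 1)" and H2: "d + c + p * (n div 2 + 1) \<le> p * s"
    by (simp_all add: left_contaminated_def d_def c_def)
  then have H2': "d + c + p * (n div 2) \<le> p * (s - 1)"
    by (simp add: algebra_simps diff_mult_distrib2)
  have "length C' = p" using move \<open>length C = p\<close> by (simp add: cmove_def)
  then have "x + c' \<le> p" using card_Kpq_parts_inter_le[of q C' p] by (simp add: x_def c'_def)
  from LD blocked have "Kpq_left p - set C \<subseteq> Kpq_left p \<inter> set C'" by blast
  then have "card (Kpq_left p - set C) \<le> c'" unfolding c'_def by (intro card_mono) auto
  moreover have "card (Kpq_left p - set C) = p - c"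
    by (simp add: c_def card_Diff_subset_Int)
  ultimately have "x \<le> c" using \<open>x + c' \<le> p\<close> card_Kpq_left_inter_le[of p "set C"]
    by (simp add: c_def)
  txt \<open>The cleared right vertices and the cops there are too few to cover the right part.\<close>
  with H2' right_part_large obtain r where r: "r \<in> Kpq_right q" "r \<in> D" "r \<notin> set C'"
    using exists_contaminated_right[of q D "set C'"] by (auto simp: d_def x_def)
  then have "Kpq_left p - set C' \<subseteq> D'"
    by (auto simp: D'_def contaminated_after_Kpq Kpq_parts_iff)
  moreover have "Kpq_right q - D' \<subseteq> (Kpq_right q - D) \<union> (Kpq_right q \<inter> set C')"
    by (auto simp: D'_def contaminated_after_Kpq Kpq_parts_iff)
  then have "card (Kpq_right q - D') \<le> d + x" unfolding d_def x_def
    by (meson card_Un_le card_mono finite_Diff finite_Int finite_Kpq_right finite_UnI le_trans)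
  moreover have "p * s = p * (s - 1) + p" using \<open>n + 4 \<le> 2 * s\<close>
    by (cases s) (simp_all add: algebra_simps)
  ultimately show ?thesis
    using \<open>n + 4 \<le> 2 * s\<close> H1 H2' \<open>x \<le> c\<close> \<open>x + c' \<le> p\<close>
    unfolding left_contaminated_def c'_def by linarith
qed

lemma left_contaminated_step_open:
  assumes "n + 4 \<le> 2 * s" "length C' = p"
    and l: "l \<in> Kpq_left p" "l \<in> D" "l \<notin> set C'"
    and r: "r \<in> Kpq_right q" "r \<in> D" "r \<notin> set C'"
  defines "D' \<equiv> contaminated_after (Kpq_V p q) Kpq_E D (set C')"
  shows "left_contaminated n C' D'"
proof (rule left_contaminated_intro)
  from l r have "Kpq_V p q - set C' \<subseteq> D'"
    by (auto simp: D'_def contaminated_after_Kpq Kpq_parts_iff)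
  then show "Kpq_left p - set C' \<subseteq> D'" by (auto simp: Kpq_V_eq)
  from \<open>Kpq_V p q - set C' \<subseteq> D'\<close> have "Kpq_right q - D' \<subseteq> Kpq_right q \<inter> set C'"
    by (auto simp: Kpq_V_eq)
  then have "card (Kpq_right q - D') \<le> card (Kpq_right q \<inter> set C')" by (intro card_mono) auto
  with card_Kpq_parts_inter_le[of q C' p] assms(1,2)
  show "card (Kpq_right q - D') \<le> p"
    "card (Kpq_right q - D') + card (Kpq_left p \<inter> set C') \<le> p \<and> n + 4 \<le> 2 * s \<or> n + 5 \<le> 2 * s"
    by linarith+
qed

lemma right_contaminated_step_open:
  assumes "n + 4 \<le> 2 * s" and l: "l \<in> Kpq_left p" "l \<in> D" "l \<notin> set C'"
  defines "D' \<equiv> contaminated_after (Kpq_V p q) Kpq_E D (set C')"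
  shows "right_contaminated n C' D'"
  unfolding right_contaminated_def
proof (intro conjI bexI)
  show "Kpq_right q - set C' \<subseteq> D'" "l \<in> D'"
    using l by (auto simp: D'_def contaminated_after_Kpq Kpq_parts_iff)
qed (use assms in auto)

lemma right_contaminated_step:
  assumes inv: "right_contaminated (Suc n) C D" and move: "cmove (Kpq_V p q) Kpq_E C C'"
    and "length C = p"
  defines "D' \<equiv> contaminated_after (Kpq_V p q) Kpq_E D (set C')"
  shows "left_contaminated n C' D'"
proof (rule left_contaminated_intro)
  from inv have RD: "Kpq_right q - set C \<subseteq> D" and "Suc n + 4 \<le> 2 * s"
    by (simp_all add: right_contaminated_def)
  from \<open>length C = p\<close> p_less_q obtain r where "r \<in> Kpq_right q" "r \<notin> set C" "r \<notin> set C'"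
    using exists_unvisited_on_side[OF move _ Kpq_right_side] by auto
  with RD show "Kpq_left p - set C' \<subseteq> D'"
    by (auto simp: D'_def contaminated_after_Kpq Kpq_parts_iff)
  from RD have "Kpq_right q - D' \<subseteq> (set C \<union> set C') \<inter> {x. isl x = False}"
    by (auto simp: D'_def contaminated_after_Kpq Kpq_parts_iff)
  then have "card (Kpq_right q - D') \<le> card ((set C \<union> set C') \<inter> {x. isl x = False})"
    by (intro card_mono) auto
  with card_visited_side_le[OF move, of False] \<open>length C = p\<close>
  show "card (Kpq_right q - D') \<le> p" by simp
  show "card (Kpq_right q - D') + card (Kpq_left p \<inter> set C') \<le> p \<and> n + 4 \<le> 2 * s \<or>
      n + 5 \<le> 2 * s"
    using \<open>Suc n + 4 \<le> 2 * s\<close> by simp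
qed

lemma contaminated_nonempty:
  "left_contaminated n C D \<or> right_contaminated n C D \<Longrightarrow> D \<noteq> {}"
  using right_part_large unfolding left_contaminated_def right_contaminated_def by auto

lemma contaminated_step:
  assumes "left_contaminated (Suc n) C D \<or> right_contaminated (Suc n) C D"
    and move: "cmove (Kpq_V p q) Kpq_E C C'" and "length C = p"
  defines "D' \<equiv> contaminated_after (Kpq_V p q) Kpq_E D (set C')"
  shows "left_contaminated n C' D' \<or> right_contaminated n C' D'"
proof (cases "left_contaminated (Suc n) C D")
  case True
  then have "n + 4 \<le> 2 * s" by (simp add: left_contaminated_def)
  have "length C' = p" using move \<open>length C = p\<close> by (simp add: cmove_def)
  show ?thesis
  proof (cases "\<exists>l\<in>Kpq_left p. l \<in> D \<and> l \<notin> set C'")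
    case open_left: True
    show ?thesis
    proof (cases "\<exists>r\<in>Kpq_right q. r \<in> D \<and> r \<notin> set C'")
      case True
      with open_left show ?thesis
        using left_contaminated_step_open[OF \<open>n + 4 \<le> 2 * s\<close> \<open>length C' = p\<close>]
        by (auto simp: D'_def)
    next
      case False
      with open_left show ?thesis
        using right_contaminated_step_open[OF \<open>n + 4 \<le> 2 * s\<close>] by (auto simp: D'_def)
    qed
  next
    case False
    then have "Kpq_left p \<inter> D \<subseteq> set C'" by blast
    with True show ?thesis
      using left_contaminated_step_blocked[OF _ move \<open>length C = p\<close>] by (simp add: D'_def)
  qed
next
  case False
  with assms(1) show ?thesis
    using right_contaminated_step[OF _ move \<open>length C = p\<close>] by (simp add: D'_def)
qed

lemma contaminated_never_clears:
  "length C = p \<Longrightarrow> left_contaminated n C D \<or> right_contaminated n C D \<Longrightarrow>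
    \<not> clears (Kpq_V p q) Kpq_E n C D"
proof (induction n arbitrary: C D)
  case 0
  then show ?case using contaminated_nonempty by simp
next
  case (Suc n)
  have "\<not> clears (Kpq_V p q) Kpq_E n C' (contaminated_after (Kpq_V p q) Kpq_E D (set C'))"
    if move: "cmove (Kpq_V p q) Kpq_E C C'" for C'
  proof (rule Suc.IH)
    show "length C' = p" using move Suc.prems(1) by (simp add: cmove_def)
  qed (rule contaminated_step[OF Suc.prems(2) move Suc.prems(1)])
  with Suc.prems(2) show ?case using contaminated_nonempty by auto
qed

lemma not_can_clear_Kpq_lower:
  assumes "2 \<le> s"
  shows "\<not> can_clear (Kpq_V p q) Kpq_E p (2 * s - 3)"
proof
  assume "can_clear (Kpq_V p q) Kpq_E p (2 * s - 3)"
  then obtain C where C: "length C = p" "clears (Kpq_V p q) Kpq_E (2 * s - 3) C (Kpq_V p q - set C)"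
    unfolding can_clear_def by blast
  have "Kpq_right q - (Kpq_V p q - set C) \<subseteq> Kpq_right q \<inter> set C" by (auto simp: Kpq_V_eq)
  then have "card (Kpq_right q - (Kpq_V p q - set C)) \<le> card (Kpq_right q \<inter> set C)"
    by (intro card_mono) auto
  moreover note card_Kpq_parts_inter_le[of q C p]
  moreover obtain t where "s = t + 2" using assms by (metis add.commute le_add_diff_inverse)
  moreover have "Kpq_left p - set C \<subseteq> Kpq_V p q - set C" by (auto simp: Kpq_V_eq)
  ultimately have "left_contaminated (2 * s - 3) C (Kpq_V p q - set C)"
    unfolding left_contaminated_def using C(1) by (simp add: algebra_simps)
  with C contaminated_never_clears show False by blast
qed

end

lemma ceiling_divide_bounds:
  fixes p q :: nat
  assumes "0 < p" "0 < q"
  defines "s \<equiv> nat \<lceil>real q / real p\<rceil>"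
  shows "q \<le> p * s" "p * (s - 1) < q"
proof -
  have "1 \<le> \<lceil>real q / real p\<rceil>" using assms by simp
  then have s: "real s = real_of_int \<lceil>real q / real p\<rceil>" "1 \<le> s" by (simp_all add: s_def le_nat_iff)
  have "real q / real p \<le> real s" using s(1) by linarith
  with assms(1) have "real q \<le> real (p * s)" by (simp add: divide_le_eq mult.commute)
  then show "q \<le> p * s" by linarith
  have "real (s - 1) < real q / real p" using s by (simp add: of_nat_diff) linarith
  with assms(1) have "real (p * (s - 1)) < real q" by (simp add: less_divide_eq mult.commute)
  then show "p * (s - 1) < q" by linarith
qed

definition Kpq_clearing_time :: "nat \<Rightarrow> nat \<Rightarrow> nat" where
  "Kpq_clearing_time p q = (if p < q then 2 * nat \<lceil>real q / real p\<rceil> - 2 else 1)"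

lemma real_Kpq_clearing_time:
  assumes "0 < p"
  shows "real (Kpq_clearing_time p q) =
    (if p < q then real_of_int (2 * \<lceil>real q / real p\<rceil> - 2) else 1)"
proof (cases "p < q")
  case True
  define c where "c = \<lceil>real q / real p\<rceil>"
  have "1 \<le> c" using assms True by (simp add: c_def)
  then have "1 \<le> nat c" "real (nat c) = real_of_int c" by simp_all
  with True show ?thesis by (simp add: Kpq_clearing_time_def c_def[symmetric] of_nat_diff)
qed (simp add: Kpq_clearing_time_def)

lemma can_clear_Kpq_iff:
  assumes "1 \<le> p" "p \<le> q"
  shows "can_clear (Kpq_V p q) Kpq_E p t \<longleftrightarrow> Kpq_clearing_time p q \<le> t"
proof -
  define s where "s = nat \<lceil>real q / real p\<rceil>"
  from assms have s: "q \<le> p * s" "p * (s - 1) < q"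
    using ceiling_divide_bounds[of p q] by (simp_all add: s_def)
  have T: "Kpq_clearing_time p q = (if p < q then 2 * s - 2 else 1)"
    by (simp add: Kpq_clearing_time_def s_def)
  have "\<not> can_clear (Kpq_V p q) Kpq_E p t" if "t < Kpq_clearing_time p q"
  proof (cases "p < q")
    case True
    from True s(1) have "2 \<le> s" by (rule two_le_of_less_le_mult)
    with True that T have "t \<le> 2 * s - 3" by simp
    with not_can_clear_Kpq_lower[OF True s(2) \<open>2 \<le> s\<close>] show ?thesis
      using can_clear_mono by blast
  next
    case False
    with that T have "t = 0" by simp
    have "\<not> Kpq_V p q \<subseteq> set C" if "length C = p" for C
      using Kpq_not_covered[of C p q] that assms by simp
    then show ?thesis
      unfolding \<open>t = 0\<close> can_clear_def clears.simps(1) Diff_eq_empty_iff by blast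
  qed
  moreover have "can_clear (Kpq_V p q) Kpq_E p (Kpq_clearing_time p q)"
    using can_clear_Kpq_upper[OF assms s(1)] T by simp
  ultimately show ?thesis using can_clear_mono not_le by blast
qed

lemma capt_Kpq_tendsto:
  assumes "1 \<le> p" "p \<le> q"
  shows "(\<lambda>m. real (capt (Kpq_V p q) Kpq_E p m)) \<longlonglongrightarrow> real (Kpq_clearing_time p q)"
proof -
  have "capt (Kpq_V p q) Kpq_E p m = Kpq_clearing_time p q"
    if "(p + q) ^ Kpq_clearing_time p q \<le> m" for m
    using that can_clear_Kpq_iff[OF assms] by (intro capt_eq_clearing_time) auto
  then show ?thesis by (intro tendsto_eventually) (auto simp: eventually_sequentially)
qed

lemma cop_win_Kpq: "1 \<le> p \<Longrightarrow> p \<le> q \<Longrightarrow> cop_win (Kpq_V p q) Kpq_E p"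
  using can_clear_Kpq_iff can_clear_imp_capt_bound unfolding cop_win_def by blast

lemma not_strong_cop_win_fewer_cops:
  assumes "1 \<le> k" "k < p" "p \<le> q"
  shows "\<not> strong_cop_win (Kpq_V p q) Kpq_E k"
proof (cases "k = 1")
  case True
  with assms show ?thesis using not_cop_win_one_cop by (simp add: strong_cop_win_def)
next
  case False
  have "\<not> can_clear (Kpq_V p q) Kpq_E k t" for t
    using assms(2,3) by (rule not_can_clear_fewer_cops)
  moreover have "\<exists>t. capt_bound (Kpq_V p q) Kpq_E k m t" for m
    using two_cops_capt_bound[of p q k] assms False by auto
  ultimately have "\<not> convergent (\<lambda>m. real (capt (Kpq_V p q) Kpq_E k m))"
    by (rule capt_not_convergent[OF finite_Kpq_V])
  then show ?thesis by (simp add: strong_cop_win_def)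
qed

theorem mainTheorem17:
  fixes p q :: nat
  assumes "1 \<le> p" and "p \<le> q"
  shows "strong_cop_win (Kpq_V p q) Kpq_E p
       \<and> (\<forall>k. 1 \<le> k \<and> k \<le> p - 1 \<longrightarrow> \<not> strong_cop_win (Kpq_V p q) Kpq_E k)
       \<and> (\<lambda>m. real (capt (Kpq_V p q) Kpq_E p m)) \<longlonglongrightarrow>
           (if q > p then real_of_int (2 * \<lceil>real q / real p\<rceil> - 2) else 1)"
proof -
  have "(\<lambda>m. real (capt (Kpq_V p q) Kpq_E p m)) \<longlonglongrightarrow> real (Kpq_clearing_time p q)"
    using assms by (rule capt_Kpq_tendsto)
  moreover have "cop_win (Kpq_V p q) Kpq_E p"
    using assms by (rule cop_win_Kpq)
  moreover have "\<not> strong_cop_win (Kpq_V p q) Kpq_E k" if "1 \<le> k" "k \<le> p - 1" for k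
    using that assms by (intro not_strong_cop_win_fewer_cops) auto
  ultimately show ?thesis
    using assms by (auto simp: strong_cop_win_def convergent_def real_Kpq_clearing_time)
qed

end
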